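(* Let $(Y_i,u_i)$, $i\in I$, be ultrametric spaces whose value sets $u_iY_i$ are all contained in a common totally ordered set, and assume that $I$ is finite or that $\bigcup_{i\in I}u_iY_i$ is well ordered. Equip $\prod_{i\in I}Y_i$ with $u((y_i)_{i\in I},(z_i)_{i\in I}):=\min_{i\in I}u_i(y_i,z_i)$. If every $(Y_i,u_i)$ is spherically complete, then so is the direct product $(\prod_{i\in I}Y_i,u)$.
   Context: An ultrametric space $(Y,u)$ is a set with a map $u$ from $Y\times Y$ onto a totally ordered set $\Gamma$ with last element $\infty$ such that $u(y,z)=\infty$ iff $y=z$, $u(y,z)\ge\min\{u(y,x),u(x,z)\}$ and $u(y,z)=u(z,y)$; its value set is $uY=\Gamma\setminus\{\infty\}$. Closed balls are $B_\alpha(y)=\{z:u(y,z)\ge\alpha\}$; a ball is a union of a non-empty collection of closed balls with a common element; a nest of balls is a set of balls totally ordered by inclusion; the space is spherically complete if every nest of balls has non-empty intersection. The map $u$ on the product is an ultrametric with values in $\bigcup_i u_iY_i\cup\{\infty\}$. *)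

theory Defs
  imports "HOL-Library.FuncSet"
begin

text \<open>Ultrametric spaces with values in a totally ordered type with last element
  \<open>top\<close> (playing the role of \<infinity>). The space is the carrier set \<open>Y\<close>.\<close>

definition ultrametric :: "'a set \<Rightarrow> ('a \<Rightarrow> 'a \<Rightarrow> 'g::{linorder,order_top}) \<Rightarrow> bool" where
  "ultrametric Y u \<longleftrightarrow>
     (\<forall>y\<in>Y. \<forall>z\<in>Y. (u y z = top \<longleftrightarrow> y = z) \<and> u y z = u z y \<and>
        (\<forall>x\<in>Y. min (u y x) (u x z) \<le> u y z))"

definition value_set :: "'a set \<Rightarrow> ('a \<Rightarrow> 'a \<Rightarrow> 'g::{linorder,order_top}) \<Rightarrow> 'g set" where
  "value_set Y u = {u y z | y z. y \<in> Y \<and> z \<in> Y \<and> y \<noteq> z}"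

definition value_range :: "'a set \<Rightarrow> ('a \<Rightarrow> 'a \<Rightarrow> 'g::{linorder,order_top}) \<Rightarrow> 'g set" where
  "value_range Y u = {u y z | y z. y \<in> Y \<and> z \<in> Y}"

definition closed_ball :: "'a set \<Rightarrow> ('a \<Rightarrow> 'a \<Rightarrow> 'g::{linorder,order_top}) \<Rightarrow> 'g \<Rightarrow> 'a \<Rightarrow> 'a set" where
  "closed_ball Y u \<alpha> y = {z \<in> Y. \<alpha> \<le> u y z}"

definition closed_balls :: "'a set \<Rightarrow> ('a \<Rightarrow> 'a \<Rightarrow> 'g::{linorder,order_top}) \<Rightarrow> 'a set set" where
  "closed_balls Y u = {closed_ball Y u \<alpha> y | \<alpha> y. \<alpha> \<in> value_range Y u \<and> y \<in> Y}"

definition is_ball :: "'a set \<Rightarrow> ('a \<Rightarrow> 'a \<Rightarrow> 'g::{linorder,order_top}) \<Rightarrow> 'a set \<Rightarrow> bool" where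
  "is_ball Y u B \<longleftrightarrow>
     (\<exists>C. C \<noteq> {} \<and> C \<subseteq> closed_balls Y u \<and> (\<exists>x. \<forall>D\<in>C. x \<in> D) \<and> B = \<Union>C)"

definition nest_of_balls :: "'a set \<Rightarrow> ('a \<Rightarrow> 'a \<Rightarrow> 'g::{linorder,order_top}) \<Rightarrow> 'a set set \<Rightarrow> bool" where
  "nest_of_balls Y u N \<longleftrightarrow>
     N \<noteq> {} \<and> (\<forall>B\<in>N. is_ball Y u B) \<and> (\<forall>B\<in>N. \<forall>B'\<in>N. B \<subseteq> B' \<or> B' \<subseteq> B)"

definition spherically_complete :: "'a set \<Rightarrow> ('a \<Rightarrow> 'a \<Rightarrow> 'g::{linorder,order_top}) \<Rightarrow> bool" where
  "spherically_complete Y u \<longleftrightarrow> (\<forall>N. nest_of_balls Y u N \<longrightarrow> \<Inter>N \<noteq> {})"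

definition well_ordered_set :: "'g::linorder set \<Rightarrow> bool" where
  "well_ordered_set S \<longleftrightarrow> (\<forall>T. T \<subseteq> S \<and> T \<noteq> {} \<longrightarrow> (\<exists>m\<in>T. \<forall>t\<in>T. m \<le> t))"

definition prod_u :: "'i set \<Rightarrow> ('i \<Rightarrow> 'a \<Rightarrow> 'a \<Rightarrow> 'g::{linorder,order_top})
                      \<Rightarrow> ('i \<Rightarrow> 'a) \<Rightarrow> ('i \<Rightarrow> 'a) \<Rightarrow> 'g" where
  "prod_u I u y z = (if I = {} then top else (LEAST v. \<exists>i\<in>I. v = u i (y i) (z i)))"

end

theory Submission
  imports Defs
begin

text \<open>A ball of the product is a union of products \<open>\<Prod>\<^sub>i B\<^sub>\<alpha>(x\<^sub>i)\<close> over a set \<open>A\<close> of radii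
  around one common centre \<open>x\<close> (any point of the ball can serve as centre). Its projection to the
  \<open>i\<close>-th factor is the ball \<open>\<Union>\<^sub>\<alpha>\<^sub>\<in>\<^sub>A B\<^sub>\<alpha>(x\<^sub>i)\<close>, so a nest in the product projects to a nest in each
  factor, and spherical completeness of the factors yields a point \<open>z\<close> whose coordinates lie in
  all projected balls. Coordinatewise membership implies membership in the product ball because
  the minimum of the coordinate distances \<open>u\<^sub>i(x\<^sub>i,z\<^sub>i)\<close> is attained: trivially if \<open>I\<close> is finite,
  and by well-ordering of the value sets otherwise.\<close>

definition ball_of_radii :: "'a set \<Rightarrow> ('a \<Rightarrow> 'a \<Rightarrow> 'g::{linorder,order_top}) \<Rightarrow> 'g set \<Rightarrow> 'a \<Rightarrow> 'a set"
  where "ball_of_radii Y u A x = {v \<in> Y. \<exists>\<alpha>\<in>A. \<alpha> \<le> u x v}"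

definition prod_ball_of_radii ::
    "'i set \<Rightarrow> ('i \<Rightarrow> 'a set) \<Rightarrow> ('i \<Rightarrow> 'a \<Rightarrow> 'a \<Rightarrow> 'g::{linorder,order_top}) \<Rightarrow> 'g set
     \<Rightarrow> ('i \<Rightarrow> 'a) \<Rightarrow> ('i \<Rightarrow> 'a) set"
  where "prod_ball_of_radii I Y u A x = {w \<in> Pi\<^sub>E I Y. \<exists>\<alpha>\<in>A. \<forall>i\<in>I. \<alpha> \<le> u i (x i) (w i)}"

lemma ultrametric_self: "ultrametric Y u \<Longrightarrow> x \<in> Y \<Longrightarrow> u x x = top"
  unfolding ultrametric_def by blast

lemma ultrametric_ge_recenter:
  assumes "ultrametric Y u" "x \<in> Y" "y \<in> Y" "v \<in> Y" "\<alpha> \<le> u y x"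
  shows "\<alpha> \<le> u y v \<longleftrightarrow> \<alpha> \<le> u x v"
proof
  have "u x y = u y x" "min (u x y) (u y v) \<le> u x v"
    using assms(1-4) unfolding ultrametric_def by blast+
  then show "\<alpha> \<le> u x v" if "\<alpha> \<le> u y v"
    using assms(5) that by (metis min.bounded_iff order_trans)
next
  have "min (u y x) (u x v) \<le> u y v"
    using assms(1-4) unfolding ultrametric_def by blast
  then show "\<alpha> \<le> u y v" if "\<alpha> \<le> u x v"
    using assms(5) that by (metis min.bounded_iff order_trans)
qed

lemma closed_balls_subset: "D \<in> closed_balls Y u \<Longrightarrow> D \<subseteq> Y"
  unfolding closed_balls_def closed_ball_def by auto

lemma is_ball_subset: "is_ball Y u B \<Longrightarrow> B \<subseteq> Y"
  unfolding is_ball_def using closed_balls_subset by blast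

lemma is_ball_ball_of_radii:
  assumes ultra: "ultrametric Y u" and x: "x \<in> Y" and "A \<noteq> {}"
  shows "is_ball Y u (ball_of_radii Y u A x)"
proof -
  let ?C = "(\<lambda>v. closed_ball Y u (u x v) x) ` ball_of_radii Y u A x"
  have top: "u x x = top"
    using ultrametric_self[OF ultra x] .
  have "x \<in> ball_of_radii Y u A x"
    using \<open>A \<noteq> {}\<close> x top unfolding ball_of_radii_def by auto
  then have "?C \<noteq> {}" by blast
  moreover have "?C \<subseteq> closed_balls Y u"
    unfolding closed_balls_def value_range_def ball_of_radii_def using x by blast
  moreover have "\<forall>D\<in>?C. x \<in> D"
    unfolding closed_ball_def using top x by auto
  moreover have "ball_of_radii Y u A x = \<Union>?C"
  proof
    show "ball_of_radii Y u A x \<subseteq> \<Union>?C"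
      unfolding closed_ball_def ball_of_radii_def by blast
    show "\<Union>?C \<subseteq> ball_of_radii Y u A x"
      unfolding closed_ball_def ball_of_radii_def by (blast intro: order_trans)
  qed
  ultimately show ?thesis
    unfolding is_ball_def by (intro exI[of _ ?C]) blast
qed

locale ultrametric_product =
  fixes I :: "'i set" and Y :: "'i \<Rightarrow> 'a set"
    and u :: "'i \<Rightarrow> 'a \<Rightarrow> 'a \<Rightarrow> 'g::{linorder,order_top}"
  assumes ultra: "\<forall>i\<in>I. ultrametric (Y i) (u i)"
    and fin_or_wo: "finite I \<or> well_ordered_set (\<Union>i\<in>I. value_set (Y i) (u i))"
begin

lemma coordinate_self [simp]: "x \<in> Pi\<^sub>E I Y \<Longrightarrow> i \<in> I \<Longrightarrow> u i (x i) (x i) = top"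
  using ultra ultrametric_self PiE_mem by metis

lemma coordinate_distance_min_attained:
  assumes "I \<noteq> {}" and x: "x \<in> Pi\<^sub>E I Y" and z: "z \<in> Pi\<^sub>E I Y"
  shows "\<exists>k\<in>I. \<forall>i\<in>I. u k (x k) (z k) \<le> u i (x i) (z i)"
  using fin_or_wo
proof
  let ?d = "\<lambda>i. u i (x i) (z i)"
  assume "finite I"
  then have min: "Min (?d ` I) \<in> ?d ` I" "\<forall>i\<in>I. Min (?d ` I) \<le> ?d i"
    using \<open>I \<noteq> {}\<close> by simp_all
  from min(1) obtain k where "Min (?d ` I) = ?d k" "k \<in> I"
    by (rule imageE)
  then show ?thesis
    using min(2) by metis
next
  assume wo: "well_ordered_set (\<Union>i\<in>I. value_set (Y i) (u i))"
  have top: "u i (x i) (z i) = top" if "i \<in> I" "x i = z i" for i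
    using that x by (metis coordinate_self)
  let ?T = "{u i (x i) (z i) | i. i \<in> I \<and> x i \<noteq> z i}"
  show ?thesis
  proof (cases "?T = {}")
    case True
    then have "\<forall>i\<in>I. u i (x i) (z i) = top"
      using top by blast
    then show ?thesis
      using \<open>I \<noteq> {}\<close> by (metis equals0I top_greatest)
  next
    case False
    have "?T \<subseteq> (\<Union>i\<in>I. value_set (Y i) (u i))"
      unfolding value_set_def using x z by (fastforce dest: PiE_mem)
    then obtain k where "k \<in> I" and min: "\<forall>t\<in>?T. u k (x k) (z k) \<le> t"
      using wo False unfolding well_ordered_set_def by blast
    moreover have "u k (x k) (z k) \<le> u i (x i) (z i)" if "i \<in> I" for i
      using that min top[of i] by (cases "x i = z i") auto
    ultimately show ?thesis by blast
  qed
qed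

lemma ge_prod_u_iff:
  assumes "x \<in> Pi\<^sub>E I Y" "z \<in> Pi\<^sub>E I Y"
  shows "\<alpha> \<le> prod_u I u x z \<longleftrightarrow> (\<forall>i\<in>I. \<alpha> \<le> u i (x i) (z i))"
proof (cases "I = {}")
  case True
  then show ?thesis unfolding prod_u_def by simp
next
  case False
  obtain k where k: "k \<in> I" "\<forall>i\<in>I. u k (x k) (z k) \<le> u i (x i) (z i)"
    using coordinate_distance_min_attained[OF False assms] by blast
  then have "prod_u I u x z = u k (x k) (z k)"
    unfolding prod_u_def using False by (auto intro!: Least_equality)
  then show ?thesis
    using k by (metis order_trans)
qed

lemma closed_ball_prod_u:
  assumes "y \<in> Pi\<^sub>E I Y"
  shows "closed_ball (Pi\<^sub>E I Y) (prod_u I u) \<alpha> y = {w \<in> Pi\<^sub>E I Y. \<forall>i\<in>I. \<alpha> \<le> u i (y i) (w i)}"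
  unfolding closed_ball_def using ge_prod_u_iff[OF assms] by blast

text \<open>Every closed ball through \<open>x\<close> is centred at \<open>x\<close>, so one centre serves for the whole union.\<close>

lemma is_ball_prod_u_obtain:
  assumes "is_ball (Pi\<^sub>E I Y) (prod_u I u) B"
  obtains x A where "x \<in> Pi\<^sub>E I Y" "A \<noteq> {}" "B = prod_ball_of_radii I Y u A x"
proof -
  obtain C x where C: "C \<noteq> {}" "C \<subseteq> closed_balls (Pi\<^sub>E I Y) (prod_u I u)"
    "\<forall>D\<in>C. x \<in> D" "B = \<Union>C"
    using assms unfolding is_ball_def by blast
  define S where "S \<alpha> = {w \<in> Pi\<^sub>E I Y. \<forall>i\<in>I. \<alpha> \<le> u i (x i) (w i)}" for \<alpha>
  obtain D\<^sub>0 where "D\<^sub>0 \<in> C"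
    using C(1) by blast
  then have "D\<^sub>0 \<subseteq> Pi\<^sub>E I Y"
    using C(2) by (intro closed_balls_subset) blast
  then have x: "x \<in> Pi\<^sub>E I Y"
    using C(3) \<open>D\<^sub>0 \<in> C\<close> by blast
  have centred: "\<exists>\<alpha>. D = S \<alpha>" if "D \<in> C" for D
  proof -
    obtain \<alpha> y where y: "y \<in> Pi\<^sub>E I Y" "D = closed_ball (Pi\<^sub>E I Y) (prod_u I u) \<alpha> y"
      using \<open>D \<in> C\<close> C(2) unfolding closed_balls_def by blast
    then have D: "D = {w \<in> Pi\<^sub>E I Y. \<forall>i\<in>I. \<alpha> \<le> u i (y i) (w i)}"
      using closed_ball_prod_u by blast
    have "x \<in> D"
      using \<open>D \<in> C\<close> C(3) by blast
    then have yx: "\<alpha> \<le> u i (y i) (x i)" if "i \<in> I" for i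
      using that unfolding D by simp
    have "\<alpha> \<le> u i (y i) (w i) \<longleftrightarrow> \<alpha> \<le> u i (x i) (w i)"
      if "w \<in> Pi\<^sub>E I Y" "i \<in> I" for w i
    proof (rule ultrametric_ge_recenter[of "Y i" "u i"])
      show "ultrametric (Y i) (u i)"
        using ultra \<open>i \<in> I\<close> by blast
      show "x i \<in> Y i" "y i \<in> Y i" "w i \<in> Y i"
        using x y(1) that by (simp_all add: PiE_mem)
      show "\<alpha> \<le> u i (y i) (x i)"
        using yx \<open>i \<in> I\<close> .
    qed
    then have "D = S \<alpha>"
      unfolding D S_def by (intro Collect_cong) (metis (no_types, lifting))
    then show ?thesis ..
  qed
  define A where "A = {\<alpha>. S \<alpha> \<in> C}"
  have "B = \<Union>(S ` A)"
    unfolding A_def C(4) using centred by blast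
  moreover have "A \<noteq> {}"
    using C(1) centred unfolding A_def by blast
  ultimately show ?thesis
    using that x unfolding prod_ball_of_radii_def S_def by blast
qed

lemma coordinate_image_prod_ball_of_radii:
  assumes x: "x \<in> Pi\<^sub>E I Y" and i: "i \<in> I"
  shows "(\<lambda>w. w i) ` prod_ball_of_radii I Y u A x = ball_of_radii (Y i) (u i) A (x i)"
proof
  show "(\<lambda>w. w i) ` prod_ball_of_radii I Y u A x \<subseteq> ball_of_radii (Y i) (u i) A (x i)"
    unfolding prod_ball_of_radii_def ball_of_radii_def using i by (auto dest: PiE_mem)
next
  show "ball_of_radii (Y i) (u i) A (x i) \<subseteq> (\<lambda>w. w i) ` prod_ball_of_radii I Y u A x"
  proof
    fix v assume "v \<in> ball_of_radii (Y i) (u i) A (x i)"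
    then obtain \<alpha> where v: "v \<in> Y i" "\<alpha> \<in> A" "\<alpha> \<le> u i (x i) v"
      unfolding ball_of_radii_def by blast
    \<comment> \<open>change only the \<open>i\<close>-th coordinate of the centre; the others are at distance \<open>top\<close>\<close>
    have "x(i := v) \<in> prod_ball_of_radii I Y u A x"
      unfolding prod_ball_of_radii_def using x v i
      by (auto simp: PiE_iff extensional_def)
    then show "v \<in> (\<lambda>w. w i) ` prod_ball_of_radii I Y u A x"
      by (metis fun_upd_same image_eqI)
  qed
qed

lemma nest_of_balls_coordinate_image:
  assumes N: "nest_of_balls (Pi\<^sub>E I Y) (prod_u I u) N" and i: "i \<in> I"
  shows "nest_of_balls (Y i) (u i) ((`) (\<lambda>w. w i) ` N)"
  unfolding nest_of_balls_def
proof (intro conjI ballI)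
  show "(`) (\<lambda>w. w i) ` N \<noteq> {}"
    using N unfolding nest_of_balls_def by blast
next
  fix B' assume "B' \<in> (`) (\<lambda>w. w i) ` N"
  then obtain B where "B \<in> N" "B' = (\<lambda>w. w i) ` B" by blast
  moreover obtain x A where "x \<in> Pi\<^sub>E I Y" "A \<noteq> {}" "B = prod_ball_of_radii I Y u A x"
    using is_ball_prod_u_obtain N \<open>B \<in> N\<close> unfolding nest_of_balls_def by metis
  ultimately show "is_ball (Y i) (u i) B'"
    using is_ball_ball_of_radii coordinate_image_prod_ball_of_radii ultra i PiE_mem by metis
next
  fix B1 B2 assume "B1 \<in> (`) (\<lambda>w. w i) ` N" "B2 \<in> (`) (\<lambda>w. w i) ` N"
  then obtain C1 C2 where "C1 \<in> N" "C2 \<in> N" "B1 = (\<lambda>w. w i) ` C1" "B2 = (\<lambda>w. w i) ` C2"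
    by blast
  moreover have "C1 \<subseteq> C2 \<or> C2 \<subseteq> C1"
    using N \<open>C1 \<in> N\<close> \<open>C2 \<in> N\<close> unfolding nest_of_balls_def by blast
  ultimately show "B1 \<subseteq> B2 \<or> B2 \<subseteq> B1"
    using image_mono by blast
qed

lemma mem_prod_ball_of_radii_iff:
  assumes "x \<in> Pi\<^sub>E I Y" "z \<in> Pi\<^sub>E I Y" "A \<noteq> {}"
  shows "z \<in> prod_ball_of_radii I Y u A x \<longleftrightarrow> (\<forall>i\<in>I. z i \<in> ball_of_radii (Y i) (u i) A (x i))"
proof
  assume "\<forall>i\<in>I. z i \<in> ball_of_radii (Y i) (u i) A (x i)"
  then have coord: "\<forall>i\<in>I. \<exists>\<alpha>\<in>A. \<alpha> \<le> u i (x i) (z i)"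
    unfolding ball_of_radii_def by blast
  have "\<exists>\<alpha>\<in>A. \<forall>i\<in>I. \<alpha> \<le> u i (x i) (z i)"
  proof (cases "I = {}")
    case False
    then obtain k where "k \<in> I" "\<forall>i\<in>I. u k (x k) (z k) \<le> u i (x i) (z i)"
      using coordinate_distance_min_attained assms(1,2) by blast
    then show ?thesis
      using coord by (meson order_trans)
  qed (use \<open>A \<noteq> {}\<close> in blast)
  then show "z \<in> prod_ball_of_radii I Y u A x"
    unfolding prod_ball_of_radii_def using assms(2) by blast
qed (use assms(2) in \<open>auto simp: prod_ball_of_radii_def ball_of_radii_def dest: PiE_mem\<close>)

lemma Inter_nest_nonempty_if_coordinate_images:
  assumes N: "nest_of_balls (Pi\<^sub>E I Y) (prod_u I u) N"
    and coords: "\<forall>i\<in>I. \<Inter>((`) (\<lambda>w. w i) ` N) \<noteq> {}"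
  shows "\<Inter>N \<noteq> {}"
proof -
  have "\<forall>i\<in>I. \<exists>v. v \<in> \<Inter>((`) (\<lambda>w. w i) ` N)"
    using coords by blast
  from bchoice[OF this] obtain z where z: "\<forall>i\<in>I. \<forall>B\<in>N. z i \<in> (\<lambda>w. w i) ` B"
    by blast
  obtain B\<^sub>0 where "B\<^sub>0 \<in> N"
    using N unfolding nest_of_balls_def by blast
  then have "is_ball (Pi\<^sub>E I Y) (prod_u I u) B\<^sub>0"
    using N unfolding nest_of_balls_def by blast
  then have B\<^sub>0: "B\<^sub>0 \<subseteq> Pi\<^sub>E I Y"
    by (rule is_ball_subset)
  have "z i \<in> Y i" if "i \<in> I" for i
  proof -
    have "z i \<in> (\<lambda>w. w i) ` B\<^sub>0"
      using z \<open>B\<^sub>0 \<in> N\<close> that by simp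
    then obtain w where "z i = w i" "w \<in> B\<^sub>0"
      by (rule imageE)
    then show ?thesis
      using B\<^sub>0 that by (auto dest: PiE_mem)
  qed
  then have z_mem: "restrict z I \<in> Pi\<^sub>E I Y"
    by simp
  have "restrict z I \<in> B" if "B \<in> N" for B
  proof -
    have "is_ball (Pi\<^sub>E I Y) (prod_u I u) B"
      using N \<open>B \<in> N\<close> unfolding nest_of_balls_def by blast
    then obtain x A where x: "x \<in> Pi\<^sub>E I Y" and "A \<noteq> {}" and B: "B = prod_ball_of_radii I Y u A x"
      by (rule is_ball_prod_u_obtain)
    have "z i \<in> ball_of_radii (Y i) (u i) A (x i)" if "i \<in> I" for i
      using z \<open>B \<in> N\<close> that coordinate_image_prod_ball_of_radii[OF x that, of A] unfolding B
      by blast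
    then show ?thesis
      unfolding B using mem_prod_ball_of_radii_iff[OF x z_mem \<open>A \<noteq> {}\<close>] by simp
  qed
  then show ?thesis by blast
qed

end

theorem proposition10:
  fixes I :: "'i set" and Y :: "'i \<Rightarrow> 'a set"
    and u :: "'i \<Rightarrow> 'a \<Rightarrow> 'a \<Rightarrow> 'g::{linorder,order_top}"
  assumes ultra: "\<forall>i\<in>I. ultrametric (Y i) (u i)"
    and fin_or_wo: "finite I \<or> well_ordered_set (\<Union>i\<in>I. value_set (Y i) (u i))"
    and sc: "\<forall>i\<in>I. spherically_complete (Y i) (u i)"
  shows "spherically_complete (Pi\<^sub>E I Y) (prod_u I u)"
  unfolding spherically_complete_def
proof (intro allI impI)
  interpret ultrametric_product I Y u
    using ultra fin_or_wo by unfold_locales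
  fix N assume N: "nest_of_balls (Pi\<^sub>E I Y) (prod_u I u) N"
  have "\<forall>i\<in>I. \<Inter>((`) (\<lambda>w. w i) ` N) \<noteq> {}"
    using sc nest_of_balls_coordinate_image[OF N] unfolding spherically_complete_def by blast
  then show "\<Inter>N \<noteq> {}"
    by (rule Inter_nest_nonempty_if_coordinate_images[OF N])
qed

end
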